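(* Let $\mu,\delta>0$. Then (a) $xy\le x\exp\big(x^\delta/\mu^\delta\big)+\mu\,y(\ln(1+y))^{1/\delta}$ for all $x,y\ge0$; (b) $xy\le x\exp\big((\ln(1+x))^\delta/\mu^\delta\big)+y\exp\big(\mu(\ln(1+y))^{1/\delta}\big)$ for all $x,y\ge0$. Furthermore, for each $q>1$ and $\varepsilon>0$ there is a constant $C_{q,\varepsilon,\mu,\delta}>0$ depending only on $(q,\varepsilon,\mu,\delta)$ such that (c) $xy\le\varepsilon\exp\big(qx^\delta/\mu^\delta\big)+\mu\,y(\ln(1+y))^{1/\delta}+C_{q,\varepsilon,\mu,\delta}$ for all $x,y\ge0$, and (d) in the case $\delta>1$, $xy\le\varepsilon\exp\big(q(\ln(1+x))^\delta/\mu^\delta\big)+y\exp\big(\mu(\ln(1+y))^{1/\delta}\big)+C_{q,\varepsilon,\mu,\delta}$ for all $x,y\ge0$. In particular, (e) $xy\le\mu\exp(x/\mu)+\mu\,y\ln(1+y)$ for all $x,y\ge0$; (f) for each $q>1$ there is a constant $\bar C_{\mu,q}>0$ depending only on $(\mu,q)$ such that $y e^{x}\le\bar C_{\mu,q}\exp\big(qx^2/\mu^2\big)+y\exp\big(\mu\sqrt{\ln(1+y)}\big)$ for all $x,y\ge0$. In addition, (g) for $\delta>1$, $xy\le\mu x^\delta+\mu^{-\frac{1}{\delta-1}}y^{\delta^*}$ for all $x,y\ge0$, where $\delta^*:=\delta/(\delta-1)$. *)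

theory Defs
  imports Complex_Main
begin

end

theory Submission
  imports Defs "HOL-Analysis.Convex" "HOL-Real_Asymp.Real_Asymp"
begin

text \<open>Parts (a) and (b) are Young-type inequalities for a pair of almost mutually inverse
  functions \<open>\<phi>\<close>, \<open>\<psi>\<close>: if \<open>y \<le> \<phi> x\<close> then \<open>x y \<le> x \<phi> x\<close>, and otherwise \<open>x \<le> \<psi> y\<close>, so
  \<open>x y \<le> y \<psi> y\<close>. For (a) \<open>\<phi> x = exp ((x/\<mu>)\<^sup>\<delta>)\<close> and \<open>\<psi> y = \<mu> ln (1 + y)\<^bsup>1/\<delta>\<^esup>\<close>;
  for (b) \<open>x\<close> is replaced by \<open>ln (1 + x)\<close> and \<open>\<psi>\<close> is exponentiated. In (c) and (d) the factor
  \<open>x\<close> of \<open>x \<phi> x\<close> is eventually dominated by \<open>\<epsilon> exp ((q - 1) (\<dots>)\<^sup>\<delta> / \<mu>\<^sup>\<delta>)\<close> (for (d) this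
  needs \<open>\<delta> > 1\<close>), and the bounded initial range goes into the constant. Part (f) is the same
  dichotomy for \<open>\<delta> = 2\<close>, where completing the square absorbs \<open>e\<^sup>x\<close> into \<open>exp (q x\<^sup>2/\<mu>\<^sup>2)\<close>.
  Part (e) is the Fenchel--Young inequality for \<open>exp\<close>, and (g) is Young's inequality applied
  to a rescaled pair of factors.\<close>

lemma mult_le_add_by_threshold:
  fixes \<phi> \<psi> :: "real \<Rightarrow> real" and x y :: real
  assumes "x \<ge> 0" "y \<ge> 0" "\<phi> x \<ge> 0" "\<psi> y \<ge> 0"
    and "\<phi> x < y \<Longrightarrow> x \<le> \<psi> y"
  shows "x * y \<le> x * \<phi> x + y * \<psi> y"
proof (cases "y \<le> \<phi> x")
  case True
  then have "x * y \<le> x * \<phi> x" using assms(1) by (simp add: mult_left_mono)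
  then show ?thesis using mult_nonneg_nonneg[OF assms(2,4)] by linarith
next
  case False
  then have "x * y \<le> \<psi> y * y" using assms by (intro mult_right_mono) auto
  then show ?thesis using mult_nonneg_nonneg[OF assms(1,3)] mult.commute[of "\<psi> y" y] by linarith
qed

lemma less_mult_ln_powr_if_exp_powr_less:
  fixes \<mu> \<delta> t y :: real
  assumes "\<mu> > 0" "\<delta> > 0" "t \<ge> 0" and less: "exp (t powr \<delta> / \<mu> powr \<delta>) < y"
  shows "t < \<mu> * ln (1 + y) powr (1 / \<delta>)"
proof -
  have "y > 0" using less exp_gt_zero less_trans by blast
  have "exp ((t / \<mu>) powr \<delta>) < exp (ln y)"
    using less \<open>y > 0\<close> by (simp add: powr_divide)
  then have "(t / \<mu>) powr \<delta> < ln y" by simp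
  then have "ln y > 0" by (rule le_less_trans[OF powr_ge_zero])
  have "t / \<mu> = ((t / \<mu>) powr \<delta>) powr (1 / \<delta>)"
    using assms by (simp add: powr_powr)
  also have "\<dots> < ln y powr (1 / \<delta>)"
    using \<open>(t / \<mu>) powr \<delta> < ln y\<close> assms by (intro powr_less_mono2) auto
  also have "\<dots> \<le> ln (1 + y) powr (1 / \<delta>)"
    using \<open>ln y > 0\<close> \<open>y > 0\<close> assms by (intro powr_mono2) auto
  finally show ?thesis using assms by (simp add: field_simps)
qed

lemma mult_le_exp_powr_add_ln_powr:
  fixes \<mu> \<delta> x y :: real
  assumes "\<mu> > 0" "\<delta> > 0" "x \<ge> 0" "y \<ge> 0"
  shows "x * y \<le> x * exp (x powr \<delta> / \<mu> powr \<delta>) + \<mu> * y * ln (1 + y) powr (1 / \<delta>)"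
  using mult_le_add_by_threshold[of x y "\<lambda>x. exp (x powr \<delta> / \<mu> powr \<delta>)"
      "\<lambda>y. \<mu> * ln (1 + y) powr (1 / \<delta>)"]
    less_mult_ln_powr_if_exp_powr_less[OF assms(1,2,3)] assms
  by (simp add: mult_ac less_imp_le)

lemma mult_le_exp_ln_powr_add_exp_ln_powr:
  fixes \<mu> \<delta> x y :: real
  assumes "\<mu> > 0" "\<delta> > 0" "x \<ge> 0" "y \<ge> 0"
  shows "x * y \<le> x * exp (ln (1 + x) powr \<delta> / \<mu> powr \<delta>) + y * exp (\<mu> * ln (1 + y) powr (1 / \<delta>))"
proof (rule mult_le_add_by_threshold)
  assume "exp (ln (1 + x) powr \<delta> / \<mu> powr \<delta>) < y"
  then have "ln (1 + x) < \<mu> * ln (1 + y) powr (1 / \<delta>)"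
    using assms by (intro less_mult_ln_powr_if_exp_powr_less) auto
  then have "exp (ln (1 + x)) < exp (\<mu> * ln (1 + y) powr (1 / \<delta>))" by simp
  then have "1 + x < exp (\<mu> * ln (1 + y) powr (1 / \<delta>))"
    using assms by simp
  then show "x \<le> exp (\<mu> * ln (1 + y) powr (1 / \<delta>))" by simp
qed (use assms in auto)

lemma eventually_le_imp_le_plus_const:
  fixes f g :: "real \<Rightarrow> real"
  assumes "eventually (\<lambda>x. f x \<le> g x) at_top"
    and "mono_on {0..} f" and "\<And>x. x \<ge> 0 \<Longrightarrow> g x \<ge> 0"
  shows "\<exists>C>0. \<forall>x\<ge>0. f x \<le> g x + C"
proof -
  obtain R where R: "\<And>x. x \<ge> R \<Longrightarrow> f x \<le> g x"
    using assms(1) by (auto simp: eventually_at_top_linorder)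
  define C where "C = 1 + \<bar>f (max R 0)\<bar>"
  have "C > 0" by (simp add: C_def)
  have "f x \<le> g x + C" if "x \<ge> 0" for x
  proof (cases "x \<ge> R")
    case True
    then show ?thesis using R \<open>C > 0\<close> by (simp add: add_increasing2)
  next
    case False
    then have "f x \<le> f (max R 0)" using \<open>x \<ge> 0\<close> by (intro mono_onD[OF assms(2)]) auto
    then show ?thesis using assms(3)[OF \<open>x \<ge> 0\<close>] C_def by linarith
  qed
  with \<open>C > 0\<close> show ?thesis by blast
qed

lemma mult_le_add_plus_const:
  fixes F G H :: "real \<Rightarrow> real"
  assumes "\<And>x y. x \<ge> 0 \<Longrightarrow> y \<ge> 0 \<Longrightarrow> x * y \<le> F x + G y"
    and "eventually (\<lambda>x. F x \<le> H x) at_top" "mono_on {0..} F" "\<And>x. x \<ge> 0 \<Longrightarrow> H x \<ge> 0"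
  shows "\<exists>C>0. \<forall>x y. x \<ge> 0 \<longrightarrow> y \<ge> 0 \<longrightarrow> x * y \<le> H x + G y + C"
proof -
  obtain C where "C > 0" and C: "\<And>x. x \<ge> 0 \<Longrightarrow> F x \<le> H x + C"
    using eventually_le_imp_le_plus_const[OF assms(2-4)] by blast
  have "x * y \<le> H x + G y + C" if "x \<ge> 0" "y \<ge> 0" for x y
    using assms(1)[OF that] C[OF that(1)] by linarith
  with \<open>C > 0\<close> show ?thesis by blast
qed

lemma mono_on_mult_exp_powr:
  fixes h :: "real \<Rightarrow> real" and \<mu> \<delta> :: real
  assumes "mono_on {0..} h" "\<And>x. x \<ge> 0 \<Longrightarrow> h x \<ge> 0" "\<mu> > 0" "\<delta> > 0"
  shows "mono_on {0..} (\<lambda>x. x * exp (h x powr \<delta> / \<mu> powr \<delta>))"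
proof (rule mono_onI)
  fix x z :: real assume "x \<in> {0..}" "z \<in> {0..}" "x \<le> z"
  then have "h x \<le> h z" by (rule mono_onD[OF assms(1)])
  then have "h x powr \<delta> \<le> h z powr \<delta>"
    using assms \<open>x \<in> {0..}\<close> by (intro powr_mono2) auto
  then have "h x powr \<delta> / \<mu> powr \<delta> \<le> h z powr \<delta> / \<mu> powr \<delta>"
    by (simp add: divide_right_mono)
  then show "x * exp (h x powr \<delta> / \<mu> powr \<delta>) \<le> z * exp (h z powr \<delta> / \<mu> powr \<delta>)"
    using \<open>x \<in> {0..}\<close> \<open>x \<le> z\<close> by (intro mult_mono) auto
qed

lemma mult_le_exp_powr_add_ln_powr_add_const:
  fixes \<mu> \<delta> q \<epsilon> :: real
  assumes "\<mu> > 0" "\<delta> > 0" "q > 1" "\<epsilon> > 0"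
  shows "\<exists>C>0. \<forall>x y. x \<ge> 0 \<longrightarrow> y \<ge> 0 \<longrightarrow>
    x * y \<le> \<epsilon> * exp (q * x powr \<delta> / \<mu> powr \<delta>) + \<mu> * y * ln (1 + y) powr (1 / \<delta>) + C"
proof (rule mult_le_add_plus_const[where F = "\<lambda>x. x * exp (x powr \<delta> / \<mu> powr \<delta>)"])
  show "eventually (\<lambda>x. x * exp (x powr \<delta> / \<mu> powr \<delta>) \<le> \<epsilon> * exp (q * x powr \<delta> / \<mu> powr \<delta>)) at_top"
    using assms by real_asymp
  show "mono_on {0..} (\<lambda>x. x * exp (x powr \<delta> / \<mu> powr \<delta>))"
    using assms by (intro mono_on_mult_exp_powr) (auto intro: mono_onI)
qed (use assms mult_le_exp_powr_add_ln_powr in simp_all)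

lemma mult_le_exp_ln_powr_add_exp_ln_powr_add_const:
  fixes \<mu> \<delta> q \<epsilon> :: real
  assumes "\<mu> > 0" "\<delta> > 1" "q > 1" "\<epsilon> > 0"
  shows "\<exists>C>0. \<forall>x y. x \<ge> 0 \<longrightarrow> y \<ge> 0 \<longrightarrow>
    x * y \<le> \<epsilon> * exp (q * ln (1 + x) powr \<delta> / \<mu> powr \<delta>) + y * exp (\<mu> * ln (1 + y) powr (1 / \<delta>)) + C"
proof (rule mult_le_add_plus_const[where F = "\<lambda>x. x * exp (ln (1 + x) powr \<delta> / \<mu> powr \<delta>)"])
  show "eventually (\<lambda>x. x * exp (ln (1 + x) powr \<delta> / \<mu> powr \<delta>)
      \<le> \<epsilon> * exp (q * ln (1 + x) powr \<delta> / \<mu> powr \<delta>)) at_top"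
    using assms by real_asymp
  show "mono_on {0..} (\<lambda>x. x * exp (ln (1 + x) powr \<delta> / \<mu> powr \<delta>))"
    using assms by (intro mono_on_mult_exp_powr) (auto intro: mono_onI)
qed (use assms mult_le_exp_ln_powr_add_exp_ln_powr in simp_all)

lemma mult_le_exp_add_mult_ln:
  fixes s y :: real
  assumes "y > 0"
  shows "s * y \<le> exp s + y * (ln y - 1)"
proof -
  have "1 + (s - ln y) \<le> exp (s - ln y)" by (rule exp_ge_add_one_self)
  also have "\<dots> = exp s / y" using assms by (simp add: exp_diff)
  finally show ?thesis using assms by (simp add: field_simps)
qed

lemma mult_le_exp_add_ln:
  fixes \<mu> x y :: real
  assumes "\<mu> > 0" "y \<ge> 0"
  shows "x * y \<le> \<mu> * exp (x / \<mu>) + \<mu> * y * ln (1 + y)"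
proof (cases "y = 0")
  case False
  with assms have "y > 0" by simp
  have "x * y = \<mu> * (x / \<mu> * y)" using assms by simp
  also have "\<dots> \<le> \<mu> * (exp (x / \<mu>) + y * (ln y - 1))"
    using assms by (intro mult_left_mono[OF mult_le_exp_add_mult_ln[OF \<open>y > 0\<close>]]) auto
  also have "\<dots> \<le> \<mu> * (exp (x / \<mu>) + y * ln (1 + y))"
  proof -
    have "y * ln y \<le> y * ln (1 + y)" using \<open>y > 0\<close> by (intro mult_left_mono) auto
    then have "y * (ln y - 1) \<le> y * ln (1 + y)"
      using \<open>y > 0\<close> unfolding right_diff_distrib by linarith
    then show ?thesis by (rule mult_left_mono[OF add_left_mono]) (use assms in simp)
  qed
  finally show ?thesis by (simp add: algebra_simps)
qed (use assms in simp)

lemma mult_exp_le_const_exp_square_add_exp_sqrt_ln: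
  fixes \<mu> q :: real
  assumes "\<mu> > 0" "q > 1"
  shows "\<exists>C>0. \<forall>x y. x \<ge> 0 \<longrightarrow> y \<ge> 0 \<longrightarrow>
    y * exp x \<le> C * exp (q * x\<^sup>2 / \<mu>\<^sup>2) + y * exp (\<mu> * sqrt (ln (1 + y)))"
proof -
  define a where "a = (q - 1) / \<mu>\<^sup>2"
  have "a > 0" using assms by (simp add: a_def)
  have square: "x\<^sup>2 / \<mu>\<^sup>2 + x \<le> 1 / (4 * a) + q * x\<^sup>2 / \<mu>\<^sup>2" for x :: real
  proof -
    have "0 \<le> (2 * a * x - 1)\<^sup>2 / (4 * a)" using \<open>a > 0\<close> by simp
    also have "\<dots> = a * x\<^sup>2 - x + 1 / (4 * a)"
      using \<open>a > 0\<close> by (simp add: field_simps power2_eq_square)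
    moreover have "a * x\<^sup>2 = q * x\<^sup>2 / \<mu>\<^sup>2 - x\<^sup>2 / \<mu>\<^sup>2"
      using assms by (simp add: a_def field_simps)
    ultimately show ?thesis by linarith
  qed
  have "y * exp x \<le> exp (1 / (4 * a)) * exp (q * x\<^sup>2 / \<mu>\<^sup>2) + y * exp (\<mu> * sqrt (ln (1 + y)))"
    if "x \<ge> 0" "y \<ge> 0" for x y :: real
  proof (cases "x \<le> \<mu> * sqrt (ln (1 + y))")
    case True
    then have "y * exp x \<le> y * exp (\<mu> * sqrt (ln (1 + y)))"
      using \<open>y \<ge> 0\<close> by (intro mult_left_mono) auto
    then show ?thesis by (simp add: add_increasing)
  next
    case False
    then have "\<not> exp (x powr 2 / \<mu> powr 2) < y"
      using less_mult_ln_powr_if_exp_powr_less[of \<mu> 2 x y] assms that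
      by (auto simp: powr_half_sqrt)
    then have "y * exp x \<le> exp (x\<^sup>2 / \<mu>\<^sup>2) * exp x"
      using that assms by (intro mult_right_mono) auto
    also have "\<dots> \<le> exp (1 / (4 * a)) * exp (q * x\<^sup>2 / \<mu>\<^sup>2)"
      using square[of x] by (simp flip: exp_add)
    finally show ?thesis using \<open>y \<ge> 0\<close> by (simp add: add_increasing2)
  qed
  then show ?thesis by (intro exI[of _ "exp (1 / (4 * a))"]) auto
qed

lemma Youngs_inequality_scaled:
  fixes p q k a b :: real
  assumes "p > 1" "q > 1" "1 / p + 1 / q = 1" "k > 0" "a \<ge> 0" "b \<ge> 0"
  shows "a * b \<le> k * a powr p / p + k powr (- q / p) * b powr q / q"
proof -
  have "a * b = (a * k powr (1 / p)) * (b * k powr (- (1 / p)))"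
    using assms by (simp add: powr_minus field_simps)
  also have "\<dots> \<le> (a * k powr (1 / p)) powr p / p + (b * k powr (- (1 / p))) powr q / q"
    by (rule Youngs_inequality) (use assms in auto)
  also have "\<dots> = k * a powr p / p + k powr (- q / p) * b powr q / q"
    using assms by (simp add: powr_mult powr_powr mult_ac)
  finally show ?thesis .
qed

lemma mult_le_powr_add_conjugate_powr:
  fixes \<mu> \<delta> x y :: real
  assumes "\<mu> > 0" "\<delta> > 1" "x \<ge> 0" "y \<ge> 0"
  shows "x * y \<le> \<mu> * x powr \<delta> + \<mu> powr (- (1 / (\<delta> - 1))) * y powr (\<delta> / (\<delta> - 1))"
proof -
  define \<delta>' where "\<delta>' = \<delta> / (\<delta> - 1)"
  define e where "e = - (1 / (\<delta> - 1))"
  have "\<delta>' > 1" "1 / \<delta> + 1 / \<delta>' = 1" "- \<delta>' / \<delta> = e"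
    using assms by (auto simp: \<delta>'_def e_def field_simps)
  have "x * y \<le> (\<mu> * \<delta>) * x powr \<delta> / \<delta> + (\<mu> * \<delta>) powr e * y powr \<delta>' / \<delta>'"
    using Youngs_inequality_scaled[of \<delta> \<delta>' "\<mu> * \<delta>" x y] assms \<open>\<delta>' > 1\<close> \<open>1 / \<delta> + _ = 1\<close> \<open>- \<delta>' / \<delta> = e\<close>
    by simp
  also have "(\<mu> * \<delta>) * x powr \<delta> / \<delta> = \<mu> * x powr \<delta>" using assms by simp
  also have "(\<mu> * \<delta>) powr e * y powr \<delta>' / \<delta>' = \<mu> powr e * y powr \<delta>' * (\<delta> powr e / \<delta>')"
    using assms by (simp add: powr_mult)
  also have "\<dots> \<le> \<mu> powr e * y powr \<delta>'"
  proof -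
    have "\<delta> powr e \<le> \<delta> powr 0" using assms by (intro powr_mono) (auto simp: e_def)
    then have "\<delta> powr e / \<delta>' \<le> 1" using \<open>\<delta>' > 1\<close> assms by simp
    then show ?thesis using \<open>\<delta>' > 1\<close> by (intro mult_right_le_one_le) auto
  qed
  finally show ?thesis by (simp add: \<delta>'_def e_def)
qed

theorem proposition4p1:
  fixes \<mu> \<delta> :: real
  assumes "\<mu> > 0" and "\<delta> > 0"
  shows
    "(\<forall>x y::real. x \<ge> 0 \<longrightarrow> y \<ge> 0 \<longrightarrow>
        x * y \<le> x * exp (x powr \<delta> / \<mu> powr \<delta>) + \<mu> * y * (ln (1 + y)) powr (1 / \<delta>))
   \<and> (\<forall>x y::real. x \<ge> 0 \<longrightarrow> y \<ge> 0 \<longrightarrow>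
        x * y \<le> x * exp ((ln (1 + x)) powr \<delta> / \<mu> powr \<delta>)
                 + y * exp (\<mu> * (ln (1 + y)) powr (1 / \<delta>)))
   \<and> (\<forall>q \<epsilon>::real. q > 1 \<longrightarrow> \<epsilon> > 0 \<longrightarrow> (\<exists>C::real. C > 0 \<and>
        (\<forall>x y::real. x \<ge> 0 \<longrightarrow> y \<ge> 0 \<longrightarrow>
          x * y \<le> \<epsilon> * exp (q * x powr \<delta> / \<mu> powr \<delta>)
                   + \<mu> * y * (ln (1 + y)) powr (1 / \<delta>) + C)))
   \<and> (\<delta> > 1 \<longrightarrow> (\<forall>q \<epsilon>::real. q > 1 \<longrightarrow> \<epsilon> > 0 \<longrightarrow> (\<exists>C::real. C > 0 \<and>
        (\<forall>x y::real. x \<ge> 0 \<longrightarrow> y \<ge> 0 \<longrightarrow>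
          x * y \<le> \<epsilon> * exp (q * (ln (1 + x)) powr \<delta> / \<mu> powr \<delta>)
                   + y * exp (\<mu> * (ln (1 + y)) powr (1 / \<delta>)) + C))))
   \<and> (\<forall>x y::real. x \<ge> 0 \<longrightarrow> y \<ge> 0 \<longrightarrow>
        x * y \<le> \<mu> * exp (x / \<mu>) + \<mu> * y * ln (1 + y))
   \<and> (\<forall>q::real. q > 1 \<longrightarrow> (\<exists>C::real. C > 0 \<and>
        (\<forall>x y::real. x \<ge> 0 \<longrightarrow> y \<ge> 0 \<longrightarrow>
          y * exp x \<le> C * exp (q * x\<^sup>2 / \<mu>\<^sup>2) + y * exp (\<mu> * sqrt (ln (1 + y))))))
   \<and> (\<delta> > 1 \<longrightarrow> (\<forall>x y::real. x \<ge> 0 \<longrightarrow> y \<ge> 0 \<longrightarrow>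
        x * y \<le> \<mu> * x powr \<delta> + \<mu> powr (- (1 / (\<delta> - 1))) * y powr (\<delta> / (\<delta> - 1))))"
proof (intro conjI allI impI)
  fix x y :: real
  assume xy: "x \<ge> 0" "y \<ge> 0"
  show "x * y \<le> x * exp (x powr \<delta> / \<mu> powr \<delta>) + \<mu> * y * ln (1 + y) powr (1 / \<delta>)"
    by (rule mult_le_exp_powr_add_ln_powr[OF assms xy])
  show "x * y \<le> x * exp (ln (1 + x) powr \<delta> / \<mu> powr \<delta>) + y * exp (\<mu> * ln (1 + y) powr (1 / \<delta>))"
    by (rule mult_le_exp_ln_powr_add_exp_ln_powr[OF assms xy])
  show "x * y \<le> \<mu> * exp (x / \<mu>) + \<mu> * y * ln (1 + y)"
    by (rule mult_le_exp_add_ln[OF assms(1) xy(2)])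
next
  fix x y :: real
  assume "\<delta> > 1" "x \<ge> 0" "y \<ge> 0"
  then show "x * y \<le> \<mu> * x powr \<delta> + \<mu> powr (- (1 / (\<delta> - 1))) * y powr (\<delta> / (\<delta> - 1))"
    by (intro mult_le_powr_add_conjugate_powr assms)
next
  fix q \<epsilon> :: real
  assume "q > 1" "\<epsilon> > 0"
  then show "\<exists>C>0. \<forall>x y. x \<ge> 0 \<longrightarrow> y \<ge> 0 \<longrightarrow>
      x * y \<le> \<epsilon> * exp (q * x powr \<delta> / \<mu> powr \<delta>) + \<mu> * y * ln (1 + y) powr (1 / \<delta>) + C"
    by (intro mult_le_exp_powr_add_ln_powr_add_const assms)
next
  fix q \<epsilon> :: real
  assume "\<delta> > 1" "q > 1" "\<epsilon> > 0"
  then show "\<exists>C>0. \<forall>x y. x \<ge> 0 \<longrightarrow> y \<ge> 0 \<longrightarrow>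
      x * y \<le> \<epsilon> * exp (q * ln (1 + x) powr \<delta> / \<mu> powr \<delta>) + y * exp (\<mu> * ln (1 + y) powr (1 / \<delta>)) + C"
    by (intro mult_le_exp_ln_powr_add_exp_ln_powr_add_const assms)
next
  fix q :: real
  assume "q > 1"
  then show "\<exists>C>0. \<forall>x y. x \<ge> 0 \<longrightarrow> y \<ge> 0 \<longrightarrow>
      y * exp x \<le> C * exp (q * x\<^sup>2 / \<mu>\<^sup>2) + y * exp (\<mu> * sqrt (ln (1 + y)))"
    by (intro mult_exp_le_const_exp_square_add_exp_sqrt_ln assms)
qed

end
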